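(* Let $P=u_1;\ldots;u_k$ be a PGLD program and let $\langle\sigma,\alpha\rangle$ be the molecular dynamics state reached from $t_{\mathrm{init}}$ by executing $\mathrm{pgldmd}(P)$ (applying $\mathrm{eff}$ for its methods in order); write $t=\langle\sigma,\alpha\rangle$. Then $\mathrm{yld}(\mathsf{equal}(s,s_1),t)=T$ and for all $j,l\in[1,k]$, $f\in\mathrm{Foci}$, $m\in\mathrm{Meth}$: (i) $u_j=f.m$ iff $\mathrm{yld}(\mathsf{getfield}(u,s_j,\mathsf{focus}),t)=T$, $\mathrm{yld}(\mathsf{equal}(u,f),\mathrm{eff}(\mathsf{getfield}(u,s_j,\mathsf{focus}),t))=T$, $\mathrm{yld}(\mathsf{getfield}(v,s_j,\mathsf{method}),t)=T$, $\mathrm{yld}(\mathsf{equal}(v,m),\mathrm{eff}(\mathsf{getfield}(v,s_j,\mathsf{method}),t))=T$, $\mathrm{yld}(\mathsf{getfield}(s,s_j,\mathsf{pos}),t)=T$, $\mathrm{yld}(\mathsf{equal}(s,s_{j+1}),\mathrm{eff}(\mathsf{getfield}(s,s_j,\mathsf{pos}),t))=T$, $\mathrm{yld}(\mathsf{getfield}(s,s_j,\mathsf{neg}),t)=T$, $\mathrm{yld}(\mathsf{equal}(s,s_{j+1}),\mathrm{eff}(\mathsf{getfield}(s,s_j,\mathsf{neg}),t))=T$; (ii) $u_j=+f.m$ iff the same eight conditions hold except that the last one has $s_{j+2}$ in place of $s_{j+1}$; (iii) $u_j=-f.m$ iff the same eight conditions hold except that the sixth one has $s_{j+2}$ in place of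 $s_{j+1}$; (iv) $u_j=\#\#l$ iff $\mathrm{yld}(\mathsf{getfield}(s,s_j,\mathsf{ajmp}),t)=T$ and $\mathrm{yld}(\mathsf{equal}(s,s_l),\mathrm{eff}(\mathsf{getfield}(s,s_j,\mathsf{ajmp}),t))=T$; (v) $u_j=\#\#l'$ for some $l'\notin[1,k]$ iff $\mathrm{yld}(\mathsf{hasfield}(s_j,\mathsf{stop}),t)=T$.
   Context: PGLD. A PGLD program $u_1;\ldots;u_k$ ($k\ge1$) is a sequence of instructions: basic instructions $f.m$, positive tests $+f.m$, negative tests $-f.m$ ($f\in\mathrm{Foci}$, $m\in\mathrm{Meth}$), and absolute jumps $\#\#l$ ($l\in\mathbb N$). Molecular dynamics. Fix a finite set $\mathrm{Spot}$ of spots; finite disjoint sets $\mathrm{Foci}$, $\mathrm{Meth}$ with $\mathrm{Foci},\mathrm{Meth}\subseteq\mathrm{Spot}$; a finite set $\mathrm{Field}$ containing distinct fields $\mathsf{stop},\mathsf{ajmp},\mathsf{focus},\mathsf{method},\mathsf{pos},\mathsf{neg}$; an infinite countable set $\mathrm{PAtom}$ of proto-atoms, $\bot\notin\mathrm{PAtom}$, with a bijection $\mathrm{proatom}:\mathbb N_{\ge1}\to\mathrm{PAtom}$. A state is a pair $\langle\sigma,\alpha\rangle$ with $\sigma:\mathrm{Spot}\to\mathrm{PAtom}\cup\{\bot\}$, $\alpha$ a map from a finite set $\mathrm{dom}(\alpha)\subseteq\mathrm{PAtom}$ (the atoms) assigning to each atom $a$ a map $\alpha(a)$ from a finite set of fields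 to $\mathrm{PAtom}\cup\{\bot\}$, all values of $\sigma$ and each $\alpha(a)$ lying in $\mathrm{dom}(\alpha)\cup\{\bot\}$. $t_{\mathrm{init}}$ is the state with $\mathrm{dom}(\alpha)=\emptyset$. For a method $m$ and state $t$, $\mathrm{eff}(m,t)$ is the new state and $\mathrm{yld}(m,t)\in\{T,F\}$ the reply; unless stated the state is unchanged ("$v$ is a field of $s$" means $\sigma(s)\ne\bot$ and $v\in\mathrm{dom}(\alpha(\sigma(s)))$): $\mathsf{create}(s)$: with $a=\mathrm{proatom}(n+1)$, $n=\max\{n':\mathrm{proatom}(n')\in\mathrm{dom}(\alpha)\}$ ($\max\emptyset=0$), set $\sigma(s):=a$ and add atom $a$ with no fields; $T$. $\mathsf{setspot}(s,s')$: $\sigma(s):=\sigma(s')$; $T$. $\mathsf{equal}(s,s')$: $T$ iff $\sigma(s)=\sigma(s')$, else $F$. $\mathsf{addfield}(s,v)$: if $\sigma(s)\ne\bot$ and $v$ is not a field of $s$, add field $v$ with content $\bot$ to atom $\sigma(s)$, $T$; else $F$. $\mathsf{hasfield}(s,v)$: $T$ iff $v$ is a field of $s$, else $F$. $\mathsf{setfield}(s,v,s')$: if $v$ is a field of $s$, set $\alpha(\sigma(s))(v):=\sigma(s')$, $T$; else $F$. $\mathsf{getfield}(s,s',v)$: if $v$ is a field of $s'$, set $\sigma(s):=\alpha(\sigma(s'))(v)$, $T$; else $F$. Representation. Fix pairwise distinct spots $s,u,v,s_1,\ldots,s_{k+2}\in\mathrm{Spot}\setminus(\mathrm{Foci}\cup\mathrm{Meth})$.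 For $P=u_1;\ldots;u_k$ with distinct occurring foci $f_1,\ldots,f_n$ and distinct occurring methods $m_1,\ldots,m_{n'}$, $\mathrm{pgldmd}(P)$ is the sequence of methods $\mathsf{create}(f_1);\ldots;\mathsf{create}(f_n);\mathsf{create}(m_1);\ldots;\mathsf{create}(m_{n'});\mathsf{create}(s_1);\ldots;\mathsf{create}(s_{k+2});\rho_1(u_1);\ldots;\rho_k(u_k);\mathsf{addfield}(s_{k+1},\mathsf{stop});\mathsf{addfield}(s_{k+2},\mathsf{stop});\mathsf{setspot}(s,s_1)$ (followed by termination), where for $u_j\in\{f.m,+f.m,-f.m\}$, $\rho_j(u_j)=\mathsf{addfield}(s_j,\mathsf{focus});\mathsf{addfield}(s_j,\mathsf{method});\mathsf{addfield}(s_j,\mathsf{pos});\mathsf{addfield}(s_j,\mathsf{neg});\mathsf{setfield}(s_j,\mathsf{focus},f);\mathsf{setfield}(s_j,\mathsf{method},m);\mathsf{setfield}(s_j,\mathsf{pos},s_p);\mathsf{setfield}(s_j,\mathsf{neg},s_q)$ with $(p,q)=(j+1,j+1)$ for $f.m$, $(j+1,j+2)$ for $+f.m$, $(j+2,j+1)$ for $-f.m$; $\rho_j(\#\#l)=\mathsf{addfield}(s_j,\mathsf{ajmp});\mathsf{setfield}(s_j,\mathsf{ajmp},s_l)$ if $1\le l\le k$, and $\rho_j(\#\#l)=\mathsf{addfield}(s_j,\mathsf{stop})$ otherwise. *)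

theory Defs
  imports Main
begin

text \<open>Instructions: basic f.m, positive test +f.m, negative test -f.m, absolute jump ##l.
  Foci and methods are spots (Foci, Meth are subsets of Spot).\<close>

datatype 's instr = Basic 's 's | PosT 's 's | NegT 's 's | AJmp nat

fun instr_foci :: "'s instr \<Rightarrow> 's list" where
  "instr_foci (Basic f m) = [f]"
| "instr_foci (PosT f m) = [f]"
| "instr_foci (NegT f m) = [f]"
| "instr_foci (AJmp l) = []"

fun instr_meths :: "'s instr \<Rightarrow> 's list" where
  "instr_meths (Basic f m) = [m]"
| "instr_meths (PosT f m) = [m]"
| "instr_meths (NegT f m) = [m]"
| "instr_meths (AJmp l) = []"

definition instr_ok :: "'s set \<Rightarrow> 's set \<Rightarrow> 's instr \<Rightarrow> bool" where
  "instr_ok Foci Meth i \<longleftrightarrow> set (instr_foci i) \<subseteq> Foci \<and> set (instr_meths i) \<subseteq> Meth"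

definition prog_foci :: "'s instr list \<Rightarrow> 's list" where
  "prog_foci P = remdups (concat (map instr_foci P))"

definition prog_meths :: "'s instr list \<Rightarrow> 's list" where
  "prog_meths P = remdups (concat (map instr_meths P))"

text \<open>Spots: type 's (finite), fields: type 'f (finite), proto-atoms: type 'p, with
  bottom represented by None. A state is (sigma, alpha).\<close>

type_synonym ('s, 'f, 'p) mdstate = "('s \<Rightarrow> 'p option) \<times> ('p \<rightharpoonup> ('f \<rightharpoonup> 'p option))"

datatype ('s, 'f) mdmeth =
    Create 's
  | SetSpot 's 's
  | Equal 's 's
  | AddField 's 'f
  | HasField 's 'f
  | SetField 's 'f 's
  | GetField 's 's 'f

definition t_init :: "('s, 'f, 'p) mdstate" where
  "t_init = ((\<lambda>_. None), Map.empty)"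

definition fields_of :: "('p \<rightharpoonup> ('f \<rightharpoonup> 'p option)) \<Rightarrow> 'p \<Rightarrow> ('f \<rightharpoonup> 'p option)" where
  "fields_of \<alpha> a = (case \<alpha> a of None \<Rightarrow> Map.empty | Some fl \<Rightarrow> fl)"

definition is_field :: "('s, 'f, 'p) mdstate \<Rightarrow> 's \<Rightarrow> 'f \<Rightarrow> bool" where
  "is_field t s v = (case fst t s of None \<Rightarrow> False | Some a \<Rightarrow> v \<in> dom (fields_of (snd t) a))"

text \<open>Effect function; proatom is the fixed bijection from positive naturals to proto-atoms.\<close>
fun eff :: "(nat \<Rightarrow> 'p) \<Rightarrow> ('s, 'f) mdmeth \<Rightarrow> ('s, 'f, 'p) mdstate \<Rightarrow> ('s, 'f, 'p) mdstate" where
  "eff proatom (Create s) (\<sigma>, \<alpha>) =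
     (let N = Max (insert 0 {n. 1 \<le> n \<and> proatom n \<in> dom \<alpha>}); a = proatom (Suc N)
      in (\<sigma>(s := Some a), \<alpha>(a \<mapsto> Map.empty)))"
| "eff proatom (SetSpot s s') (\<sigma>, \<alpha>) = (\<sigma>(s := \<sigma> s'), \<alpha>)"
| "eff proatom (Equal s s') (\<sigma>, \<alpha>) = (\<sigma>, \<alpha>)"
| "eff proatom (AddField s v) (\<sigma>, \<alpha>) =
     (case \<sigma> s of None \<Rightarrow> (\<sigma>, \<alpha>)
      | Some a \<Rightarrow> (if v \<in> dom (fields_of \<alpha> a) then (\<sigma>, \<alpha>)
                   else (\<sigma>, \<alpha>(a \<mapsto> (fields_of \<alpha> a)(v \<mapsto> None)))))"
| "eff proatom (HasField s v) (\<sigma>, \<alpha>) = (\<sigma>, \<alpha>)"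
| "eff proatom (SetField s v s') (\<sigma>, \<alpha>) =
     (case \<sigma> s of None \<Rightarrow> (\<sigma>, \<alpha>)
      | Some a \<Rightarrow> (if v \<in> dom (fields_of \<alpha> a)
                   then (\<sigma>, \<alpha>(a \<mapsto> (fields_of \<alpha> a)(v \<mapsto> \<sigma> s')))
                   else (\<sigma>, \<alpha>)))"
| "eff proatom (GetField s s' v) (\<sigma>, \<alpha>) =
     (case \<sigma> s' of None \<Rightarrow> (\<sigma>, \<alpha>)
      | Some a \<Rightarrow> (case fields_of \<alpha> a v of None \<Rightarrow> (\<sigma>, \<alpha>)
                   | Some c \<Rightarrow> (\<sigma>(s := c), \<alpha>)))"

fun yld :: "('s, 'f) mdmeth \<Rightarrow> ('s, 'f, 'p) mdstate \<Rightarrow> bool" where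
  "yld (Create s) t = True"
| "yld (SetSpot s s') t = True"
| "yld (Equal s s') t = (fst t s = fst t s')"
| "yld (AddField s v) t = (fst t s \<noteq> None \<and> \<not> is_field t s v)"
| "yld (HasField s v) t = is_field t s v"
| "yld (SetField s v s') t = is_field t s v"
| "yld (GetField s s' v) t = is_field t s' v"

definition run :: "(nat \<Rightarrow> 'p) \<Rightarrow> ('s, 'f) mdmeth list \<Rightarrow> ('s, 'f, 'p) mdstate \<Rightarrow> ('s, 'f, 'p) mdstate" where
  "run proatom ms t = fold (eff proatom) ms t"

text \<open>Parameters: sp j = s_j, the spot s, the number k of instructions, and the fields
  stop, ajmp, focus, method, pos, neg.\<close>

fun rho :: "(nat \<Rightarrow> 's) \<Rightarrow> nat \<Rightarrow> 'f \<Rightarrow> 'f \<Rightarrow> 'f \<Rightarrow> 'f \<Rightarrow> 'f \<Rightarrow> 'f \<Rightarrow> nat \<Rightarrow> 's instr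
            \<Rightarrow> ('s, 'f) mdmeth list" where
  "rho sp k fstop fajmp ffocus fmethod fpos fneg j (Basic f m) =
     [AddField (sp j) ffocus, AddField (sp j) fmethod, AddField (sp j) fpos, AddField (sp j) fneg,
      SetField (sp j) ffocus f, SetField (sp j) fmethod m,
      SetField (sp j) fpos (sp (j+1)), SetField (sp j) fneg (sp (j+1))]"
| "rho sp k fstop fajmp ffocus fmethod fpos fneg j (PosT f m) =
     [AddField (sp j) ffocus, AddField (sp j) fmethod, AddField (sp j) fpos, AddField (sp j) fneg,
      SetField (sp j) ffocus f, SetField (sp j) fmethod m,
      SetField (sp j) fpos (sp (j+1)), SetField (sp j) fneg (sp (j+2))]"
| "rho sp k fstop fajmp ffocus fmethod fpos fneg j (NegT f m) =
     [AddField (sp j) ffocus, AddField (sp j) fmethod, AddField (sp j) fpos, AddField (sp j) fneg,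
      SetField (sp j) ffocus f, SetField (sp j) fmethod m,
      SetField (sp j) fpos (sp (j+2)), SetField (sp j) fneg (sp (j+1))]"
| "rho sp k fstop fajmp ffocus fmethod fpos fneg j (AJmp l) =
     (if 1 \<le> l \<and> l \<le> k then [AddField (sp j) fajmp, SetField (sp j) fajmp (sp l)]
      else [AddField (sp j) fstop])"

definition pgldmd :: "(nat \<Rightarrow> 's) \<Rightarrow> 's \<Rightarrow> 'f \<Rightarrow> 'f \<Rightarrow> 'f \<Rightarrow> 'f \<Rightarrow> 'f \<Rightarrow> 'f \<Rightarrow> 's instr list
            \<Rightarrow> ('s, 'f) mdmeth list" where
  "pgldmd sp s fstop fajmp ffocus fmethod fpos fneg P =
     (let k = length P in
        map Create (prog_foci P) @ map Create (prog_meths P)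
      @ map (\<lambda>j. Create (sp j)) [1..<k+3]
      @ concat (map (\<lambda>j. rho sp k fstop fajmp ffocus fmethod fpos fneg j (P ! (j - 1))) [1..<k+1])
      @ [AddField (sp (k+1)) fstop, AddField (sp (k+2)) fstop, SetSpot s (sp 1)])"

end

theory Submission
  imports Defs
begin

(* Executing pgldmd(P) first creates atoms for the occurring foci and methods and for s_1, ..., s_(k+2);
  they are pairwise distinct, since each create takes proatom (N + 1) for the largest index N in use and
  proatom is injective. The atom of s_j then receives exactly the fields prescribed by u_j, pointing to the
  atoms of its focus, its method and its successor spots, and the last three steps touch only s_(k+1),
  s_(k+2) and s. As distinct spots hold distinct atoms, comparing a field of s_j, read into u, v or s, with
  a spot identifies that spot, so the readings determine u_j. *)

lemma eff_Create_fresh: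
  assumes "inj_on proatom {1..}" and "finite (dom \<alpha>)"
  obtains a where "eff proatom (Create x) (\<sigma>, \<alpha>) = (\<sigma>(x \<mapsto> a), \<alpha>(a \<mapsto> Map.empty))"
    and "a \<notin> dom \<alpha>"
proof -
  define N where "N = Max (insert 0 {n. 1 \<le> n \<and> proatom n \<in> dom \<alpha>})"
  have "{n. 1 \<le> n \<and> proatom n \<in> dom \<alpha>} = proatom -` dom \<alpha> \<inter> {1..}" by auto
  then have "finite {n. 1 \<le> n \<and> proatom n \<in> dom \<alpha>}"
    using finite_vimage_IntI[OF assms(2,1)] by simp
  then have "n \<le> N" if "1 \<le> n" and "proatom n \<in> dom \<alpha>" for n
    unfolding N_def using that by (intro Max_ge) auto
  from this[of "Suc N"] have "proatom (Suc N) \<notin> dom \<alpha>" by auto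
  then show thesis by (intro that) (simp_all add: N_def Let_def)
qed

lemma fold_Create:
  assumes inj: "inj_on proatom {1..}"
    and "fold (eff proatom) (map Create xs) (\<sigma>, \<alpha>) = (\<sigma>', \<alpha>')"
    and "distinct xs" and "finite (dom \<alpha>)"
  shows "(\<forall>x. x \<notin> set xs \<longrightarrow> \<sigma>' x = \<sigma> x) \<and>
    (\<forall>x\<in>set xs. \<exists>a. \<sigma>' x = Some a \<and> a \<notin> dom \<alpha> \<and> \<alpha>' a = Some Map.empty) \<and>
    inj_on \<sigma>' (set xs) \<and>
    (\<forall>b\<in>dom \<alpha>. \<alpha>' b = \<alpha> b)"
  using assms(2-)
proof (induction xs arbitrary: \<sigma> \<alpha>)
  case Nil
  then show ?case by simp
next
  case (Cons x xs)
  obtain a where step: "eff proatom (Create x) (\<sigma>, \<alpha>) = (\<sigma>(x \<mapsto> a), \<alpha>(a \<mapsto> Map.empty))"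
    and fresh: "a \<notin> dom \<alpha>"
    using eff_Create_fresh[OF inj Cons.prems(3)] .
  have "fold (eff proatom) (map Create xs) (\<sigma>(x \<mapsto> a), \<alpha>(a \<mapsto> Map.empty)) = (\<sigma>', \<alpha>')"
    using Cons.prems(1) step by simp
  moreover have "distinct xs" and "finite (dom (\<alpha>(a \<mapsto> Map.empty)))"
    using Cons.prems(2,3) by simp_all
  ultimately have IH: "(\<forall>y. y \<notin> set xs \<longrightarrow> \<sigma>' y = (\<sigma>(x \<mapsto> a)) y) \<and>
    (\<forall>y\<in>set xs. \<exists>b. \<sigma>' y = Some b \<and> b \<notin> dom (\<alpha>(a \<mapsto> Map.empty)) \<and> \<alpha>' b = Some Map.empty) \<and>
    inj_on \<sigma>' (set xs) \<and>
    (\<forall>b\<in>dom (\<alpha>(a \<mapsto> Map.empty)). \<alpha>' b = (\<alpha>(a \<mapsto> Map.empty)) b)"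
    by (rule Cons.IH)
  have "\<sigma>' x = Some a" using IH Cons.prems(2) by simp
  moreover have "\<sigma>' y \<noteq> Some a" if "y \<in> set xs" for y
    using IH that by fastforce
  ultimately show ?case using IH fresh by (auto simp: image_iff)
qed

lemma fold_Create_init:
  fixes proatom :: "nat \<Rightarrow> 'p"
  assumes "inj_on proatom {1..}" and "distinct xs"
  obtains \<sigma> and \<alpha> :: "'p \<rightharpoonup> ('f \<rightharpoonup> 'p option)"
  where "fold (eff proatom) (map Create xs) t_init = (\<sigma>, \<alpha>)"
    and "\<And>x y. x \<in> set xs \<Longrightarrow> \<sigma> x = \<sigma> y \<longleftrightarrow> x = y"
    and "\<And>x. x \<in> set xs \<Longrightarrow> \<exists>a. \<sigma> x = Some a \<and> \<alpha> a = Some Map.empty"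
proof -
  obtain \<sigma> and \<alpha> :: "'p \<rightharpoonup> ('f \<rightharpoonup> 'p option)"
    where created: "fold (eff proatom) (map Create xs) t_init = (\<sigma>, \<alpha>)"
    by (metis surj_pair)
  have "(\<forall>x. x \<notin> set xs \<longrightarrow> \<sigma> x = None) \<and> (\<forall>x\<in>set xs. \<exists>a. \<sigma> x = Some a \<and> \<alpha> a = Some Map.empty)
      \<and> inj_on \<sigma> (set xs)"
    using fold_Create[OF assms(1) created[unfolded t_init_def] assms(2)] by simp
  then show thesis
    by (intro that[OF created]) (metis inj_on_eq_iff option.distinct(1), blast)
qed

fun instr_fields :: "('s \<Rightarrow> 'p option) \<Rightarrow> (nat \<Rightarrow> 's) \<Rightarrow> nat \<Rightarrow> 'f \<Rightarrow> 'f \<Rightarrow> 'f \<Rightarrow> 'f \<Rightarrow> 'f \<Rightarrow> 'f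
    \<Rightarrow> nat \<Rightarrow> 's instr \<Rightarrow> ('f \<rightharpoonup> 'p option)" where
  "instr_fields \<sigma> sp k fstop fajmp ffocus fmethod fpos fneg j (Basic f m) =
     [ffocus \<mapsto> \<sigma> f, fmethod \<mapsto> \<sigma> m, fpos \<mapsto> \<sigma> (sp (j+1)), fneg \<mapsto> \<sigma> (sp (j+1))]"
| "instr_fields \<sigma> sp k fstop fajmp ffocus fmethod fpos fneg j (PosT f m) =
     [ffocus \<mapsto> \<sigma> f, fmethod \<mapsto> \<sigma> m, fpos \<mapsto> \<sigma> (sp (j+1)), fneg \<mapsto> \<sigma> (sp (j+2))]"
| "instr_fields \<sigma> sp k fstop fajmp ffocus fmethod fpos fneg j (NegT f m) =
     [ffocus \<mapsto> \<sigma> f, fmethod \<mapsto> \<sigma> m, fpos \<mapsto> \<sigma> (sp (j+2)), fneg \<mapsto> \<sigma> (sp (j+1))]"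
| "instr_fields \<sigma> sp k fstop fajmp ffocus fmethod fpos fneg j (AJmp l) =
     (if 1 \<le> l \<and> l \<le> k then [fajmp \<mapsto> \<sigma> (sp l)] else [fstop \<mapsto> None])"

lemma fold_rho:
  assumes "\<sigma> (sp j) = Some a" and "\<alpha> a = Some Map.empty"
    and "distinct [fstop, fajmp, ffocus, fmethod, fpos, fneg]"
  shows "fold (eff proatom) (rho sp k fstop fajmp ffocus fmethod fpos fneg j i) (\<sigma>, \<alpha>)
     = (\<sigma>, \<alpha>(a \<mapsto> instr_fields \<sigma> sp k fstop fajmp ffocus fmethod fpos fneg j i))"
  using assms by (cases i) (auto simp: fields_of_def fun_upd_twist)

lemma fold_rho_concat:
  assumes fields: "distinct [fstop, fajmp, ffocus, fmethod, fpos, fneg]"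
    and "distinct js" and "\<forall>j\<in>set js. \<exists>a. \<sigma> (sp j) = Some a \<and> \<alpha> a = Some Map.empty"
    and "inj_on (\<sigma> \<circ> sp) (set js)"
  shows "\<exists>\<alpha>'. fold (eff proatom) (concat (map (\<lambda>j. rho sp k fstop fajmp ffocus fmethod fpos fneg j (Q j)) js))
            (\<sigma>, \<alpha>) = (\<sigma>, \<alpha>') \<and>
      (\<forall>j\<in>set js. \<exists>a. \<sigma> (sp j) = Some a \<and>
         \<alpha>' a = Some (instr_fields \<sigma> sp k fstop fajmp ffocus fmethod fpos fneg j (Q j))) \<and>
      (\<forall>b. Some b \<notin> \<sigma> ` sp ` set js \<longrightarrow> \<alpha>' b = \<alpha> b)"
  using assms(2-)
proof (induction js arbitrary: \<alpha>)
  case Nil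
  then show ?case by simp
next
  case (Cons j js)
  obtain a where a: "\<sigma> (sp j) = Some a" "\<alpha> a = Some Map.empty"
    using Cons.prems(2) by auto
  define \<alpha>1 where "\<alpha>1 = \<alpha>(a \<mapsto> instr_fields \<sigma> sp k fstop fajmp ffocus fmethod fpos fneg j (Q j))"
  have others: "Some a \<notin> \<sigma> ` sp ` set js"
    using Cons.prems(1,3) a by (fastforce simp: inj_on_def)
  have empty: "\<forall>i\<in>set js. \<exists>b. \<sigma> (sp i) = Some b \<and> \<alpha>1 b = Some Map.empty"
  proof
    fix i assume i: "i \<in> set js"
    then obtain b where b: "\<sigma> (sp i) = Some b" "\<alpha> b = Some Map.empty"
      using Cons.prems(2) by auto
    then have "b \<noteq> a" using others i by force
    with b show "\<exists>b. \<sigma> (sp i) = Some b \<and> \<alpha>1 b = Some Map.empty" by (simp add: \<alpha>1_def)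
  qed
  have "distinct js" and "inj_on (\<sigma> \<circ> sp) (set js)"
    using Cons.prems(1,3) by (auto simp: comp_def)
  from Cons.IH[OF this(1) empty this(2)] obtain \<alpha>' where IH:
    "fold (eff proatom) (concat (map (\<lambda>j. rho sp k fstop fajmp ffocus fmethod fpos fneg j (Q j)) js))
       (\<sigma>, \<alpha>1) = (\<sigma>, \<alpha>')"
    "\<forall>i\<in>set js. \<exists>b. \<sigma> (sp i) = Some b \<and>
       \<alpha>' b = Some (instr_fields \<sigma> sp k fstop fajmp ffocus fmethod fpos fneg i (Q i))"
    "\<forall>b. Some b \<notin> \<sigma> ` sp ` set js \<longrightarrow> \<alpha>' b = \<alpha>1 b"
    by blast
  have "fold (eff proatom) (rho sp k fstop fajmp ffocus fmethod fpos fneg j (Q j)) (\<sigma>, \<alpha>) = (\<sigma>, \<alpha>1)"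
    unfolding \<alpha>1_def using a fields by (rule fold_rho)
  moreover have "\<alpha>' a = Some (instr_fields \<sigma> sp k fstop fajmp ffocus fmethod fpos fneg j (Q j))"
    using IH(3) others by (simp add: \<alpha>1_def)
  moreover have "\<alpha>' b = \<alpha> b" if "Some b \<notin> \<sigma> ` sp ` set (j # js)" for b
    using IH(3) that a by (simp add: \<alpha>1_def)
  ultimately show ?case
    using IH(1,2) a(1) by (intro exI[of _ \<alpha>']) simp
qed

lemma fold_AddField:
  obtains \<alpha>' where "fold (eff proatom) (map (\<lambda>x. AddField x fld) xs) (\<sigma>, \<alpha>) = (\<sigma>, \<alpha>')"
    and "\<And>b. Some b \<notin> \<sigma> ` set xs \<Longrightarrow> \<alpha>' b = \<alpha> b"
proof (induction xs arbitrary: \<alpha>)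
  case Nil
  then show ?case by simp
next
  case (Cons x xs)
  define \<alpha>1 where "\<alpha>1 = snd (eff proatom (AddField x fld) (\<sigma>, \<alpha>))"
  have step: "eff proatom (AddField x fld) (\<sigma>, \<alpha>) = (\<sigma>, \<alpha>1)"
    and unchanged: "\<And>b. \<sigma> x \<noteq> Some b \<Longrightarrow> \<alpha>1 b = \<alpha> b"
    unfolding \<alpha>1_def by (simp_all split: option.split)
  show ?case
  proof (rule Cons.IH[of \<alpha>1])
    fix \<alpha>' assume "fold (eff proatom) (map (\<lambda>x. AddField x fld) xs) (\<sigma>, \<alpha>1) = (\<sigma>, \<alpha>')"
      and "\<And>b. Some b \<notin> \<sigma> ` set xs \<Longrightarrow> \<alpha>' b = \<alpha>1 b"
    then show thesis using step unchanged by (intro Cons.prems[of \<alpha>']) auto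
  qed
qed

lemma fold_pgldmd_blocks:
  fixes P :: "'s instr list" and proatom :: "nat \<Rightarrow> 'p" and fstop :: 'f
  assumes inj: "inj_on proatom {1..}"
    and fields: "distinct [fstop, fajmp, ffocus, fmethod, fpos, fneg]"
    and spots: "distinct (prog_foci P @ prog_meths P @ map sp [1..<length P + 3])"
  obtains \<sigma> \<alpha> where
    "fold (eff proatom) (map Create (prog_foci P @ prog_meths P @ map sp [1..<length P + 3])
       @ concat (map (\<lambda>j. rho sp (length P) fstop fajmp ffocus fmethod fpos fneg j (P ! (j - 1)))
           [1..<length P + 1])) t_init = (\<sigma>, \<alpha>)"
    and "\<And>x y. x \<in> set (prog_foci P @ prog_meths P @ map sp [1..<length P + 3]) \<Longrightarrow>
           \<sigma> x = \<sigma> y \<longleftrightarrow> x = y"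
    and "\<And>j. j \<in> {1..length P} \<Longrightarrow> \<exists>a. \<sigma> (sp j) = Some a \<and>
           \<alpha> a = Some (instr_fields \<sigma> sp (length P) fstop fajmp ffocus fmethod fpos fneg j (P ! (j - 1)))"
proof -
  define k where "k = length P"
  define L where "L = prog_foci P @ prog_meths P @ map sp [1..<k + 3]"
  obtain \<sigma> and \<alpha>c :: "'p \<rightharpoonup> ('f \<rightharpoonup> 'p option)"
    where created: "fold (eff proatom) (map Create L) t_init = (\<sigma>, \<alpha>c)"
      and eq: "\<And>x y. x \<in> set L \<Longrightarrow> \<sigma> x = \<sigma> y \<longleftrightarrow> x = y"
      and fresh: "\<And>x. x \<in> set L \<Longrightarrow> \<exists>a. \<sigma> x = Some a \<and> \<alpha>c a = Some Map.empty"
    using fold_Create_init[OF inj] spots unfolding L_def k_def by blast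
  have "set [1..<k+3] = {1..k+2}" by auto
  then have inj_sp: "inj_on sp {1..k+2}"
    using spots by (simp add: L_def k_def distinct_map)
  have sp_in: "sp j \<in> set L" if "j \<in> {1..k+2}" for j
    using that by (auto simp: L_def k_def)
  have range: "set [1..<k+1] = {1..k}" by auto
  have "inj_on (\<sigma> \<circ> sp) {1..k}"
    using inj_sp eq sp_in by (auto simp: inj_on_def)
  moreover have "\<forall>j\<in>{1..k}. \<exists>a. \<sigma> (sp j) = Some a \<and> \<alpha>c a = Some Map.empty"
    using fresh sp_in by auto
  ultimately obtain \<alpha> where
    "fold (eff proatom) (concat (map (\<lambda>j. rho sp k fstop fajmp ffocus fmethod fpos fneg j (P ! (j - 1)))
      [1..<k+1])) (\<sigma>, \<alpha>c) = (\<sigma>, \<alpha>)"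
    and "\<forall>j\<in>{1..k}. \<exists>a. \<sigma> (sp j) = Some a \<and>
      \<alpha> a = Some (instr_fields \<sigma> sp k fstop fajmp ffocus fmethod fpos fneg j (P ! (j - 1)))"
    using fold_rho_concat[OF fields distinct_upt, of 1 "k+1" \<sigma> sp \<alpha>c proatom k "\<lambda>j. P ! (j - 1)"]
    unfolding range by blast
  then show thesis
    using that[of \<sigma> \<alpha>] created eq unfolding L_def k_def by simp
qed

lemma run_pgldmd:
  fixes P :: "'s instr list" and proatom :: "nat \<Rightarrow> 'p"
  assumes inj: "inj_on proatom {1..}"
    and fields: "distinct [fstop, fajmp, ffocus, fmethod, fpos, fneg]"
    and spots: "distinct (prog_foci P @ prog_meths P @ map sp [1..<length P + 3])"
  obtains \<sigma> \<alpha> where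
    "run proatom (pgldmd sp s fstop fajmp ffocus fmethod fpos fneg P) t_init = (\<sigma>(s := \<sigma> (sp 1)), \<alpha>)"
    and "\<And>x y. x \<in> set (prog_foci P @ prog_meths P @ map sp [1..<length P + 3]) \<Longrightarrow> \<sigma> x = \<sigma> y \<longleftrightarrow> x = y"
    and "\<And>j. j \<in> {1..length P} \<Longrightarrow> \<exists>a. \<sigma> (sp j) = Some a \<and>
           fields_of \<alpha> a = instr_fields \<sigma> sp (length P) fstop fajmp ffocus fmethod fpos fneg j (P ! (j - 1))"
proof -
  define k where "k = length P"
  define blocks where "blocks = map Create (prog_foci P @ prog_meths P @ map sp [1..<k + 3])
    @ concat (map (\<lambda>j. rho sp k fstop fajmp ffocus fmethod fpos fneg j (P ! (j - 1))) [1..<k + 1])"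
  obtain \<sigma> \<alpha> where created: "fold (eff proatom) blocks t_init = (\<sigma>, \<alpha>)"
    and eq: "\<And>x y. x \<in> set (prog_foci P @ prog_meths P @ map sp [1..<k + 3]) \<Longrightarrow> \<sigma> x = \<sigma> y \<longleftrightarrow> x = y"
    and written: "\<And>j. j \<in> {1..k} \<Longrightarrow> \<exists>a. \<sigma> (sp j) = Some a \<and>
           \<alpha> a = Some (instr_fields \<sigma> sp k fstop fajmp ffocus fmethod fpos fneg j (P ! (j - 1)))"
    using fold_pgldmd_blocks[OF inj fields spots] unfolding blocks_def k_def by blast
  obtain \<alpha>' where stops: "fold (eff proatom) (map (\<lambda>x. AddField x fstop) [sp (k+1), sp (k+2)]) (\<sigma>, \<alpha>)
       = (\<sigma>, \<alpha>')"
    and untouched: "\<And>b. Some b \<notin> \<sigma> ` set [sp (k+1), sp (k+2)] \<Longrightarrow> \<alpha>' b = \<alpha> b"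
    using fold_AddField by metis
  have "pgldmd sp s fstop fajmp ffocus fmethod fpos fneg P
      = blocks @ map (\<lambda>x. AddField x fstop) [sp (k+1), sp (k+2)] @ [SetSpot s (sp 1)]"
    by (simp add: pgldmd_def blocks_def k_def Let_def)
  then have "run proatom (pgldmd sp s fstop fajmp ffocus fmethod fpos fneg P) t_init
      = fold (eff proatom) [SetSpot s (sp 1)]
          (fold (eff proatom) (map (\<lambda>x. AddField x fstop) [sp (k+1), sp (k+2)])
            (fold (eff proatom) blocks t_init))"
    by (simp only: run_def fold_append comp_apply)
  also have "\<dots> = (\<sigma>(s := \<sigma> (sp 1)), \<alpha>')"
    by (simp only: created stops) simp
  finally have "run proatom (pgldmd sp s fstop fajmp ffocus fmethod fpos fneg P) t_init
      = (\<sigma>(s := \<sigma> (sp 1)), \<alpha>')" .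
  moreover have "\<exists>a. \<sigma> (sp j) = Some a \<and>
      fields_of \<alpha>' a = instr_fields \<sigma> sp k fstop fajmp ffocus fmethod fpos fneg j (P ! (j - 1))"
    if j: "j \<in> {1..k}" for j
  proof -
    obtain a where a: "\<sigma> (sp j) = Some a"
      and "\<alpha> a = Some (instr_fields \<sigma> sp k fstop fajmp ffocus fmethod fpos fneg j (P ! (j - 1)))"
      using written j by blast
    moreover have "\<sigma> (sp j) \<noteq> \<sigma> (sp (k+1))" and "\<sigma> (sp j) \<noteq> \<sigma> (sp (k+2))"
      using eq[of "sp j"] spots j by (auto simp: k_def inj_on_eq_iff distinct_map)
    ultimately show ?thesis using untouched by (simp add: fields_of_def)
  qed
  ultimately show thesis using that eq by (simp add: k_def)
qed

lemma distinct_pgldmd_spots: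
  assumes "Foci \<inter> Meth = {}" and "\<forall>i\<in>set P. instr_ok Foci Meth i"
    and "inj_on sp {1..length P + 2}" and "sp ` {1..length P + 2} \<inter> (Foci \<union> Meth) = {}"
  shows "distinct (prog_foci P @ prog_meths P @ map sp [1..<length P + 3])"
proof -
  have range: "set [1..<length P + 3] = {1..length P + 2}" by auto
  have foci: "set (prog_foci P) \<subseteq> Foci" and meths: "set (prog_meths P) \<subseteq> Meth"
    using assms(2) by (auto simp: prog_foci_def prog_meths_def instr_ok_def)
  have "distinct (prog_foci P)" and "distinct (prog_meths P)"
    by (simp_all add: prog_foci_def prog_meths_def)
  moreover have "distinct (map sp [1..<length P + 3])"
    using assms(3) range by (simp add: distinct_map)
  moreover have "set (prog_foci P) \<inter> set (prog_meths P) = {}"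
    using foci meths assms(1) by blast
  moreover have "(set (prog_foci P) \<union> set (prog_meths P)) \<inter> sp ` {1..length P + 2} = {}"
    using foci meths assms(4) by blast
  ultimately show ?thesis using range by auto
qed

theorem proposition1:
  fixes P :: "('s::finite) instr list"
    and Foci Meth :: "'s set"
    and proatom :: "nat \<Rightarrow> 'p"
    and sp :: "nat \<Rightarrow> 's"
    and s u v :: 's
    and fstop fajmp ffocus fmethod fpos fneg :: "'f::finite"
  assumes "bij_betw proatom {1..} (UNIV :: 'p set)"
    and "Foci \<inter> Meth = {}"
    and "distinct [fstop, fajmp, ffocus, fmethod, fpos, fneg]"
    and "P \<noteq> []"
    and "\<forall>i\<in>set P. instr_ok Foci Meth i"
    and "inj_on sp {1..length P + 2}"
    and "distinct [s, u, v]"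
    and "{s, u, v} \<inter> sp ` {1..length P + 2} = {}"
    and "({s, u, v} \<union> sp ` {1..length P + 2}) \<inter> (Foci \<union> Meth) = {}"
  defines "k \<equiv> length P"
    and "t \<equiv> run proatom (pgldmd sp s fstop fajmp ffocus fmethod fpos fneg P) t_init"
  shows "yld (Equal s (sp 1)) t \<and>
    (\<forall>j\<in>{1..k}. \<forall>l\<in>{1..k}. \<forall>f\<in>Foci. \<forall>m\<in>Meth.
      (P ! (j - 1) = Basic f m \<longleftrightarrow>
         yld (GetField u (sp j) ffocus) t \<and>
         yld (Equal u f) (eff proatom (GetField u (sp j) ffocus) t) \<and>
         yld (GetField v (sp j) fmethod) t \<and>
         yld (Equal v m) (eff proatom (GetField v (sp j) fmethod) t) \<and>
         yld (GetField s (sp j) fpos) t \<and>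
         yld (Equal s (sp (j+1))) (eff proatom (GetField s (sp j) fpos) t) \<and>
         yld (GetField s (sp j) fneg) t \<and>
         yld (Equal s (sp (j+1))) (eff proatom (GetField s (sp j) fneg) t)) \<and>
      (P ! (j - 1) = PosT f m \<longleftrightarrow>
         yld (GetField u (sp j) ffocus) t \<and>
         yld (Equal u f) (eff proatom (GetField u (sp j) ffocus) t) \<and>
         yld (GetField v (sp j) fmethod) t \<and>
         yld (Equal v m) (eff proatom (GetField v (sp j) fmethod) t) \<and>
         yld (GetField s (sp j) fpos) t \<and>
         yld (Equal s (sp (j+1))) (eff proatom (GetField s (sp j) fpos) t) \<and>
         yld (GetField s (sp j) fneg) t \<and>
         yld (Equal s (sp (j+2))) (eff proatom (GetField s (sp j) fneg) t)) \<and>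
      (P ! (j - 1) = NegT f m \<longleftrightarrow>
         yld (GetField u (sp j) ffocus) t \<and>
         yld (Equal u f) (eff proatom (GetField u (sp j) ffocus) t) \<and>
         yld (GetField v (sp j) fmethod) t \<and>
         yld (Equal v m) (eff proatom (GetField v (sp j) fmethod) t) \<and>
         yld (GetField s (sp j) fpos) t \<and>
         yld (Equal s (sp (j+2))) (eff proatom (GetField s (sp j) fpos) t) \<and>
         yld (GetField s (sp j) fneg) t \<and>
         yld (Equal s (sp (j+1))) (eff proatom (GetField s (sp j) fneg) t)) \<and>
      (P ! (j - 1) = AJmp l \<longleftrightarrow>
         yld (GetField s (sp j) fajmp) t \<and>
         yld (Equal s (sp l)) (eff proatom (GetField s (sp j) fajmp) t)) \<and>
      ((\<exists>l'. l' \<notin> {1..k} \<and> P ! (j - 1) = AJmp l') \<longleftrightarrow> yld (HasField (sp j) fstop) t))"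
proof -
  let ?L = "prog_foci P @ prog_meths P @ map sp [1..<k + 3]"
  have "distinct ?L"
    using distinct_pgldmd_spots[OF assms(2,5,6)] assms(9) unfolding k_def by blast
  then obtain \<sigma> \<alpha> where t: "t = (\<sigma>(s := \<sigma> (sp 1)), \<alpha>)"
    and eq: "\<And>x y. x \<in> set ?L \<Longrightarrow> \<sigma> x = \<sigma> y \<longleftrightarrow> x = y"
    and fields: "\<And>j. j \<in> {1..k} \<Longrightarrow> \<exists>a. \<sigma> (sp j) = Some a \<and>
      fields_of \<alpha> a = instr_fields \<sigma> sp k fstop fajmp ffocus fmethod fpos fneg j (P ! (j - 1))"
    using run_pgldmd[OF bij_betw_imp_inj_on[OF assms(1)] assms(3)] unfolding t_def k_def by metis
  have sp_ne: "sp i \<noteq> s \<and> sp i \<noteq> u \<and> sp i \<noteq> v" if "i \<in> {1..k+2}" for i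
    using assms(8) that unfolding k_def by blast
  have sp_eq: "sp i = sp i' \<longleftrightarrow> i = i'" if "i \<in> {1..k+2}" "i' \<in> {1..k+2}" for i i'
    using assms(6) that inj_on_eq_iff unfolding k_def by metis
  show ?thesis
    apply (rule conjI)
     apply (simp add: t sp_ne)
    apply (intro ballI)
    subgoal for j l f m
    proof -
      assume j: "j \<in> {1..k}" and l: "l \<in> {1..k}" and f: "f \<in> Foci" and m: "m \<in> Meth"
      obtain a where a: "\<sigma> (sp j) = Some a"
        and fa: "fields_of \<alpha> a = instr_fields \<sigma> sp k fstop fajmp ffocus fmethod fpos fneg j (P ! (j - 1))"
        using fields[OF j] by blast
      have "f \<noteq> s \<and> f \<noteq> u \<and> f \<noteq> v" "m \<noteq> s \<and> m \<noteq> u \<and> m \<noteq> v"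
        using assms(9) f m by blast+
      moreover have "set (instr_foci (P ! (j - 1))) \<union> set (instr_meths (P ! (j - 1))) \<subseteq> set ?L"
        using j by (force simp: prog_foci_def prog_meths_def k_def)
      moreover have "s \<noteq> u" "s \<noteq> v" "u \<noteq> v" using assms(7) by auto
      ultimately show ?thesis
        using j l a fa sp_ne[of j] sp_ne[of "j+1"] sp_ne[of "j+2"] sp_ne[of l] sp_eq assms(3)
        by (cases "P ! (j - 1)") (auto simp: t is_field_def eq)
    qed
    done
qed

end
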